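(* Let $B\in M_2(\mathbb C)$ have rank one. Then the following are equivalent: (i) $E_{11}\perp B$ and every matrix in $E_{11}^\perp\cap B^\perp$ has rank at most one; (ii) $B\in(\mathbb C E_{12}\cup\mathbb C E_{21})\setminus\{0\}$.
   Context: $M_2(\mathbb C)$ carries the operator (spectral) norm; $E_{ij}$ are matrix units. $X\perp Y$ (Birkhoff–James orthogonality) means $\|X+\lambda Y\|\ge\|X\|$ for all $\lambda\in\mathbb C$, and $X^\perp:=\{Y: X\perp Y\}$. *)

theory Defs
  imports "HOL-Analysis.Analysis"
begin

definition opnorm :: "complex^2^2 \<Rightarrow> real" where
  "opnorm A = onorm (\<lambda>x. A *v x)"

definition cmat_scale :: "complex \<Rightarrow> complex^2^2 \<Rightarrow> complex^2^2" where
  "cmat_scale c A = (\<chi> i j. c * A $ i $ j)"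

definition bj_orth :: "complex^2^2 \<Rightarrow> complex^2^2 \<Rightarrow> bool" where
  "bj_orth X Y \<longleftrightarrow> (\<forall>l::complex. opnorm (X + cmat_scale l Y) \<ge> opnorm X)"

definition bj_perp :: "complex^2^2 \<Rightarrow> (complex^2^2) set" where
  "bj_perp X = {Y. bj_orth X Y}"

definition E11 :: "complex^2^2" where
  "E11 = (\<chi> i j. if i = 1 \<and> j = 1 then 1 else 0)"
definition E12 :: "complex^2^2" where
  "E12 = (\<chi> i j. if i = 1 \<and> j = 2 then 1 else 0)"
definition E21 :: "complex^2^2" where
  "E21 = (\<chi> i j. if i = 2 \<and> j = 1 then 1 else 0)"

end

theory Submission
  imports Defs
begin

text \<open>Two facts decide Birkhoff--James orthogonality here. First, if the operator norm of \<open>B\<close>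
  is attained at a vector \<open>w\<close> and \<open>B w\<close> is orthogonal to \<open>X w\<close>, then
  \<open>\<parallel>(B + \<lambda>X) w\<parallel> \<ge> \<parallel>B w\<parallel>\<close>, so \<open>B \<perp> X\<close>. Second, for \<open>B = c E\<^sub>i\<^sub>j\<close> with \<open>c \<noteq> 0\<close>,
  bounding the operator norm by the Frobenius norm shows that \<open>B \<perp> X\<close> holds exactly when
  \<open>X\<^sub>i\<^sub>j = 0\<close>.

  Hence \<open>E\<^sub>1\<^sub>1 \<perp> B\<close> means \<open>B\<^sub>1\<^sub>1 = 0\<close>, and for \<open>B = c E\<^sub>1\<^sub>2\<close> or \<open>B = c E\<^sub>2\<^sub>1\<close> every common
  orthogonal \<open>X\<close> has a vanishing first row or column, hence is singular. If instead a rank-one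
  \<open>B\<close> with \<open>B\<^sub>1\<^sub>1 = 0\<close> has \<open>B\<^sub>2\<^sub>2 \<noteq> 0\<close>, the conjugated second row of \<open>B\<close> is a norming vector,
  and the first fact produces an invertible \<open>X\<close> orthogonal to both \<open>E\<^sub>1\<^sub>1\<close> and \<open>B\<close>.\<close>

definition herm_inner :: "complex^'n \<Rightarrow> complex^'n \<Rightarrow> complex" where
  "herm_inner x y = (\<Sum>i\<in>UNIV. x$i * cnj (y$i))"

lemma norm_vec_power2: "norm (x :: 'a::real_normed_vector^'n) ^ 2 = (\<Sum>i\<in>UNIV. norm (x$i) ^ 2)"
  by (simp add: norm_vec_def L2_set_def sum_nonneg)

lemma herm_inner_self: "herm_inner x x = of_real (norm x ^ 2)"
  by (simp add: herm_inner_def norm_vec_power2 flip: complex_norm_square)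

lemma herm_inner_commute: "herm_inner y x = cnj (herm_inner x y)"
  by (simp add: herm_inner_def mult.commute)

lemma norm_add_scaled_orthogonal:
  assumes "herm_inner a b = 0"
  shows "norm (a + l *s b) ^ 2 = norm a ^ 2 + cmod l ^ 2 * norm b ^ 2"
proof -
  have "herm_inner (a + l *s b) (a + l *s b)
      = herm_inner a a + cnj l * herm_inner a b + l * herm_inner b a + l * cnj l * herm_inner b b"
    by (simp add: herm_inner_def algebra_simps sum.distrib sum_distrib_left)
  also have "\<dots> = of_real (norm a ^ 2 + cmod l ^ 2 * norm b ^ 2)"
    using assms by (simp add: herm_inner_commute[of a b] herm_inner_self flip: complex_norm_square)
  finally show ?thesis
    unfolding herm_inner_self of_real_eq_iff .
qed

lemma norm_matrix_vector_mult_le: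
  fixes M :: "'a::real_normed_field^'n^'m"
  shows "norm (M *v x) \<le> norm M * norm x"
proof -
  have "norm ((M *v x)$i) \<le> norm (M$i) * norm x" for i
  proof -
    have "norm ((M *v x)$i) \<le> (\<Sum>j\<in>UNIV. norm (M$i$j) * norm (x$j))"
      unfolding matrix_vector_mult_def vec_lambda_beta
      by (rule order.trans[OF norm_sum]) (simp add: norm_mult)
    also have "\<dots> \<le> norm (M$i) * norm x"
      using L2_set_mult_ineq[of "\<lambda>j. norm (M$i$j)" "\<lambda>j. norm (x$j)" UNIV]
      by (simp add: norm_vec_def)
    finally show ?thesis .
  qed
  then have "norm (M *v x) \<le> L2_set (\<lambda>i. norm (M$i) * norm x) UNIV"
    unfolding norm_vec_def[of "M *v x"] by (intro L2_set_mono) auto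
  also have "\<dots> = norm M * norm x"
    by (simp add: norm_vec_def[of M] L2_set_left_distrib)
  finally show ?thesis .
qed

lemma opnorm_le_norm: "opnorm M \<le> norm M"
  unfolding opnorm_def by (rule onorm_le) (rule norm_matrix_vector_mult_le)

lemma norm_matrix_vector_mult_le_opnorm: "norm (M *v x) \<le> opnorm M * norm x"
  unfolding opnorm_def by (rule onorm) simp

lemma norm_axis: "norm (axis i (x :: 'a::real_inner)) = norm x"
  by (simp only: norm_eq_sqrt_inner inner_axis' axis_nth)

lemma norm_entry_le_opnorm: "norm (M$i$j) \<le> opnorm M"
proof -
  have "norm (M$i$j) = norm ((M *v axis j 1)$i)"
    by (simp add: matrix_vector_mult_def axis_def if_distrib cong: if_cong)
  also have "\<dots> \<le> norm (M *v axis j 1)"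
    by (rule Finite_Cartesian_Product.norm_nth_le)
  also have "\<dots> \<le> opnorm M"
    using norm_matrix_vector_mult_le_opnorm[of M "axis j 1"] by (simp add: norm_axis)
  finally show ?thesis .
qed

lemma norm_cmat_scale: "norm (cmat_scale l X) = cmod l * norm X"
  by (simp add: norm_vec_def cmat_scale_def norm_mult flip: L2_set_right_distrib)

text \<open>The witness \<open>l = - a cnj x / (|x|\<^sup>2 + R)\<close> is the minimiser of the left-hand side.\<close>

lemma ex_cmod_add_mult_less:
  fixes a x :: complex and R :: real
  assumes "a \<noteq> 0" "x \<noteq> 0" "R \<ge> 0"
  shows "\<exists>l. cmod (a + l * x) ^ 2 + cmod l ^ 2 * R < cmod a ^ 2"
proof -
  define s where "s = cmod x ^ 2 + R"
  have s: "s > 0"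
    using assms by (simp add: s_def add_pos_nonneg)
  define l where "l = - a * cnj x / of_real s"
  have "l * x = - a * (x * cnj x) / of_real s"
    by (simp add: l_def)
  also have "\<dots> = - a * of_real (cmod x ^ 2 / s)"
    by (simp flip: complex_norm_square)
  finally have "a + l * x = a * of_real (1 - cmod x ^ 2 / s)"
    by (simp add: algebra_simps)
  also have "1 - cmod x ^ 2 / s = R / s"
    using s by (simp add: s_def field_simps)
  finally have "a + l * x = a * of_real (R / s)" .
  then have n1: "cmod (a + l * x) = cmod a * (R / s)"
    using assms(3) s by (simp add: norm_mult norm_divide)
  have n2: "cmod l = cmod a * cmod x / s"
    using s by (simp add: l_def norm_mult norm_divide)
  have "cmod (a + l * x) ^ 2 + cmod l ^ 2 * R = cmod a ^ 2 * (R / s) * ((R + cmod x ^ 2) / s)"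
    unfolding n1 n2 using s by (simp add: field_simps power2_eq_square)
  also have "(R + cmod x ^ 2) / s = 1"
    using s by (simp add: s_def)
  also have "cmod a ^ 2 * (R / s) * 1 < cmod a ^ 2"
  proof -
    have "R / s < 1"
      using s assms(2) by (simp add: s_def field_simps)
    then show ?thesis
      using assms(1) mult_strict_left_mono[of "R / s" 1 "cmod a ^ 2"] by simp
  qed
  finally show ?thesis by blast
qed

lemma bj_orth_axis_axis_iff:
  fixes X :: "complex^2^2"
  assumes "c \<noteq> 0"
  shows "bj_orth (axis i (axis j c)) X \<longleftrightarrow> X$i$j = 0"
proof
  let ?A = "axis i (axis j c) :: complex^2^2"
  have opnorm_A: "opnorm ?A = cmod c"
    using opnorm_le_norm[of ?A] norm_entry_le_opnorm[of ?A i j] by (simp add: norm_axis)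
  show "X$i$j = 0" if orth: "bj_orth ?A X"
  proof (rule ccontr)
    assume x: "X$i$j \<noteq> 0"
    define Y where "Y = X - axis i (axis j (X$i$j))"
    obtain l where l: "cmod (c + l * X$i$j) ^ 2 + cmod l ^ 2 * norm Y ^ 2 < cmod c ^ 2"
      using ex_cmod_add_mult_less[OF assms x, of "norm Y ^ 2"] by auto
    have split: "?A + cmat_scale l X = axis i (axis j (c + l * X$i$j)) + cmat_scale l Y"
      by (simp add: Y_def cmat_scale_def vec_eq_iff axis_def algebra_simps)
    have orthogonal_parts: "orthogonal (axis i (axis j (c + l * X$i$j))) (cmat_scale l Y)"
      by (simp add: orthogonal_def inner_axis' Y_def cmat_scale_def)
    have "norm (?A + cmat_scale l X) ^ 2 = cmod (c + l * X$i$j) ^ 2 + cmod l ^ 2 * norm Y ^ 2"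
      unfolding split norm_add_Pythagorean[OF orthogonal_parts]
      by (simp add: norm_axis norm_cmat_scale power_mult_distrib)
    with l have "norm (?A + cmat_scale l X) ^ 2 < cmod c ^ 2"
      by simp
    then have "norm (?A + cmat_scale l X) < cmod c"
      by (rule power2_less_imp_less) simp
    then have "opnorm (?A + cmat_scale l X) < opnorm ?A"
      using opnorm_le_norm[of "?A + cmat_scale l X"] opnorm_A by linarith
    with orth show False
      unfolding bj_orth_def by (meson not_le)
  qed
  show "bj_orth ?A X" if "X$i$j = 0"
    unfolding bj_orth_def
  proof
    fix l
    have "(?A + cmat_scale l X)$i$j = c"
      using that by (simp add: cmat_scale_def)
    then show "opnorm ?A \<le> opnorm (?A + cmat_scale l X)"
      using norm_entry_le_opnorm[of "?A + cmat_scale l X" i j] opnorm_A by simp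
  qed
qed

lemma rank_le_1_iff_rows_span:
  fixes X :: "'a::field^'n^'m"
  shows "rank X \<le> 1 \<longleftrightarrow> (\<exists>v. rows X \<subseteq> vec.span {v})"
proof
  assume "rank X \<le> 1"
  obtain B where B: "vec.independent B" "rows X \<subseteq> vec.span B" "card B = rank X"
    unfolding row_rank_def_gen by (rule vec.basis_exists)
  then have "\<forall>a\<in>B. \<forall>b\<in>B. a = b"
    using \<open>rank X \<le> 1\<close> vec.finiteI_independent[OF B(1)]
    by (metis card_le_Suc0_iff_eq One_nat_def)
  then obtain v where "B \<subseteq> {v}"
    by (cases "B = {}") auto
  then show "\<exists>v. rows X \<subseteq> vec.span {v}"
    using B(2) vec.span_mono by blast
next
  assume "\<exists>v. rows X \<subseteq> vec.span {v}"
  then obtain v where "rows X \<subseteq> vec.span {v}" by blast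
  then have "rank X \<le> card {v}"
    unfolding row_rank_def_gen by (rule vec.dim_le_card) simp
  then show "rank X \<le> 1" by simp
qed

lemma rows_2: "rows (X :: 'a::field^'n^2) = {row 1 X, row 2 X}"
  by (auto simp: rows_def UNIV_2)

lemma rank_le_1_iff_det_eq_0:
  fixes X :: "'a::field^2^2"
  shows "rank X \<le> 1 \<longleftrightarrow> det X = 0"
  unfolding rank_le_1_iff_rows_span
proof
  assume "\<exists>v. rows X \<subseteq> vec.span {v}"
  then obtain v k1 k2 where "row 1 X = k1 *s v" "row 2 X = k2 *s v"
    by (auto simp: rows_2 vec.span_singleton)
  then have "X$1 = k1 *s v" "X$2 = k2 *s v"
    by (simp_all add: row_def vec_nth_inverse)
  then show "det X = 0"
    by (simp add: det_2)
next
  assume det: "det X = 0"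
  show "\<exists>v. rows X \<subseteq> vec.span {v}"
  proof (cases "row 2 X = 0")
    case True
    then have "rows X \<subseteq> vec.span {row 1 X}"
      by (auto simp: rows_2 vec.span_base vec.span_zero)
    then show ?thesis ..
  next
    case False
    define k where "k = (if X$2$1 \<noteq> 0 then X$1$1 / X$2$1 else X$1$2 / X$2$2)"
    have "row 1 X = k *s row 2 X"
      using False det by (auto simp: k_def row_def vec_eq_iff forall_2 det_2 field_simps)
    then have "rows X \<subseteq> vec.span {row 2 X}"
      by (simp add: rows_2 vec.span_base vec.span_scale)
    then show ?thesis ..
  qed
qed

lemma rank_0_field: "rank (0 :: 'a::field^'n^'m) = 0"
proof -
  have "rows (0 :: 'a^'n^'m) = {0}"
    by (auto simp: rows_def row_def vec_eq_iff)
  then show ?thesis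
    by (simp add: row_rank_def_gen)
qed

lemma matrix_vector_mult_add_cmat_scale:
  "(B + cmat_scale l X) *v w = B *v w + l *s (X *v w)"
  by (simp add: cmat_scale_def matrix_vector_mult_def vec_eq_iff sum.distrib sum_distrib_left algebra_simps)

lemma bj_orth_if_norming_vector:
  assumes "w \<noteq> 0" and norming: "norm (B *v w) = opnorm B * norm w"
    and "herm_inner (B *v w) (X *v w) = 0"
  shows "bj_orth B X"
  unfolding bj_orth_def
proof
  fix l
  have "norm (B *v w) ^ 2 \<le> norm ((B + cmat_scale l X) *v w) ^ 2"
    unfolding matrix_vector_mult_add_cmat_scale norm_add_scaled_orthogonal[OF assms(3)] by simp
  then have "opnorm B * norm w \<le> norm ((B + cmat_scale l X) *v w)"
    unfolding norming by (rule power2_le_imp_le) simp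
  also have "\<dots> \<le> opnorm (B + cmat_scale l X) * norm w"
    by (rule norm_matrix_vector_mult_le_opnorm)
  finally show "opnorm B \<le> opnorm (B + cmat_scale l X)"
    using assms(1) by simp
qed

text \<open>By Lagrange's identity \<open>\<parallel>M w\<parallel>\<^sup>2 + |det M|\<^sup>2 = \<parallel>M\<parallel>\<^sup>2 \<parallel>w\<parallel>\<^sup>2\<close> for the conjugated second row
  \<open>w\<close>, where \<open>\<parallel>M\<parallel>\<close> is the Frobenius norm.\<close>

lemma norm_mult_cnj_row_2:
  fixes M :: "complex^2^2"
  assumes "det M = 0"
  shows "norm (M *v (\<chi> j. cnj (M$2$j))) = norm M * norm (\<chi> j. cnj (M$2$j))"
proof -
  have "complex_of_real (norm (M *v (\<chi> j. cnj (M$2$j))) ^ 2)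
      = complex_of_real ((norm M * norm (\<chi> j. cnj (M$2$j))) ^ 2)"
  proof -
    have "M$1$1 * M$2$2 - M$1$2 * M$2$1 = 0"
      using assms by (simp add: det_2)
    moreover have "cnj (M$1$1) * cnj (M$2$2) - cnj (M$1$2) * cnj (M$2$1) = 0"
      using calculation by (metis complex_cnj_diff complex_cnj_mult complex_cnj_zero)
    ultimately show ?thesis
      unfolding power_mult_distrib norm_vec_power2 sum_2
      by (simp add: matrix_vector_mult_def sum_2 complex_norm_square[unfolded of_real_power]) algebra
  qed
  then show ?thesis
    unfolding of_real_eq_iff by simp
qed

lemma E11_eq_axis: "E11 = axis 1 (axis 1 1)"
  by (simp add: E11_def axis_def vec_eq_iff)

lemma cmat_scale_E12: "cmat_scale c E12 = axis 1 (axis 2 c)"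
  by (simp add: cmat_scale_def E12_def axis_def vec_eq_iff)

lemma cmat_scale_E21: "cmat_scale c E21 = axis 2 (axis 1 c)"
  by (simp add: cmat_scale_def E21_def axis_def vec_eq_iff)

lemma ex_invertible_common_bj_orth:
  fixes B :: "complex^2^2"
  assumes b11: "B$1$1 = 0" and b22: "B$2$2 \<noteq> 0" and det: "det B = 0"
  shows "\<exists>X \<in> bj_perp E11 \<inter> bj_perp B. det X \<noteq> 0"
proof
  txt \<open>\<open>X w\<close> is a multiple of \<open>(cnj B\<^sub>2\<^sub>2, - cnj B\<^sub>1\<^sub>2)\<close>, which is orthogonal to the column space
    of \<open>B\<close>, and \<open>det X = - (cnj B\<^sub>2\<^sub>2)\<^sup>2\<close>.\<close>
  define X :: "complex^2^2" where "X = (\<chi> i j.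
    if i = 1 \<and> j = 1 then 0 else if i = 2 \<and> j = 2 then - cnj (B$1$2) - cnj (B$2$1) else cnj (B$2$2))"
  have X: "X$1$1 = 0" "X$1$2 = cnj (B$2$2)" "X$2$1 = cnj (B$2$2)"
    "X$2$2 = - cnj (B$1$2) - cnj (B$2$1)"
    by (simp_all add: X_def)
  show "det X \<noteq> 0"
    using b22 by (simp add: det_2 X)
  let ?w = "\<chi> j. cnj (B$2$j)"
  have "bj_orth B X"
  proof (rule bj_orth_if_norming_vector)
    show "?w \<noteq> 0"
      using b22 by (auto simp: vec_eq_iff)
    have "opnorm B * norm ?w \<le> norm (B *v ?w)"
      unfolding norm_mult_cnj_row_2[OF det] by (simp add: opnorm_le_norm mult_right_mono)
    then show "norm (B *v ?w) = opnorm B * norm ?w"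
      using norm_matrix_vector_mult_le_opnorm[of B ?w] by linarith
    have "B$1$2 * B$2$1 = 0"
      using det b11 by (simp add: det_2)
    then show "herm_inner (B *v ?w) (X *v ?w) = 0"
      by (simp add: herm_inner_def sum_2 matrix_vector_mult_def X b11) algebra
  qed
  moreover have "bj_orth E11 X"
    by (simp add: E11_eq_axis bj_orth_axis_axis_iff X)
  ultimately show "X \<in> bj_perp E11 \<inter> bj_perp B"
    by (simp add: bj_perp_def)
qed

lemma det_eq_0_if_common_bj_orth:
  fixes X :: "complex^2^2"
  assumes "c \<noteq> 0" and ij: "(i, j) = (1, 2) \<or> (i, j) = (2, 1)"
    and "X \<in> bj_perp E11 \<inter> bj_perp (axis i (axis j c))"
  shows "det X = 0"
proof -
  have "X$1$1 = 0" "X$i$j = 0"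
    using assms by (simp_all add: bj_perp_def E11_eq_axis bj_orth_axis_axis_iff)
  then show ?thesis
    using ij by (auto simp: det_2)
qed

lemma mem_scaled_E12_E21_iff:
  "B \<in> range (\<lambda>c. cmat_scale c E12) \<union> range (\<lambda>c. cmat_scale c E21)
    \<longleftrightarrow> B$1$1 = 0 \<and> B$2$2 = 0 \<and> B$1$2 * B$2$1 = 0"
proof
  assume "B$1$1 = 0 \<and> B$2$2 = 0 \<and> B$1$2 * B$2$1 = 0"
  then have "B = cmat_scale (B$1$2) E12 \<or> B = cmat_scale (B$2$1) E21"
    by (auto simp: cmat_scale_E12 cmat_scale_E21 axis_def vec_eq_iff forall_2)
  then show "B \<in> range (\<lambda>c. cmat_scale c E12) \<union> range (\<lambda>c. cmat_scale c E21)"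
    by blast
qed (auto simp: cmat_scale_E12 cmat_scale_E21 axis_def)

theorem lemma5p1:
  fixes B :: "complex^2^2"
  assumes "rank B = 1"
  shows "(bj_orth E11 B \<and> (\<forall>X \<in> bj_perp E11 \<inter> bj_perp B. rank X \<le> 1))
     \<longleftrightarrow> B \<in> (range (\<lambda>c. cmat_scale c E12) \<union> range (\<lambda>c. cmat_scale c E21)) - {0}"
proof
  assume L: "bj_orth E11 B \<and> (\<forall>X \<in> bj_perp E11 \<inter> bj_perp B. rank X \<le> 1)"
  have b11: "B$1$1 = 0"
    using L by (simp add: E11_eq_axis bj_orth_axis_axis_iff)
  have det: "det B = 0"
    using assms by (simp flip: rank_le_1_iff_det_eq_0)
  have "B$2$2 = 0"
    using ex_invertible_common_bj_orth[OF b11 _ det] L rank_le_1_iff_det_eq_0 by blast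
  moreover have "B$1$2 * B$2$1 = 0"
    using b11 det by (simp add: det_2)
  moreover have "B \<noteq> 0"
    using assms rank_0_field by (metis one_neq_zero)
  ultimately show "B \<in> (range (\<lambda>c. cmat_scale c E12) \<union> range (\<lambda>c. cmat_scale c E21)) - {0}"
    using b11 mem_scaled_E12_E21_iff by blast
next
  assume B: "B \<in> (range (\<lambda>c. cmat_scale c E12) \<union> range (\<lambda>c. cmat_scale c E21)) - {0}"
  then have "B$1$1 = 0"
    using mem_scaled_E12_E21_iff by blast
  then have "bj_orth E11 B"
    by (simp add: E11_eq_axis bj_orth_axis_axis_iff)
  moreover obtain c i j where "B = axis i (axis j c)" "c \<noteq> 0" "(i, j) = (1, 2) \<or> (i, j) = (2, 1)"
    using B by (auto simp: cmat_scale_E12 cmat_scale_E21)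
  then have "\<forall>X \<in> bj_perp E11 \<inter> bj_perp B. rank X \<le> 1"
    using det_eq_0_if_common_bj_orth rank_le_1_iff_det_eq_0 by blast
  ultimately show "bj_orth E11 B \<and> (\<forall>X \<in> bj_perp E11 \<inter> bj_perp B. rank X \<le> 1)"
    by blast
qed

end
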